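(* Let $n\ge2$, $g\in H_n\rtimes S_n$ and $i\in I(g)$. Then $g_{[i]}$ lies in the centraliser $C_{H_n\rtimes S_n}(g)$ (in particular $g_{[i]}\in H_n\rtimes S_n$).
   Context: $\mathbb{N}=\{1,2,\dots\}$, $X_n=\{1,\dots,n\}\times\mathbb{N}$, permutations act on the right. $H_n$ is the group of bijections $g$ of $X_n$ with $z_i(g)\in\mathbb{N}$, $t_i(g)\in\mathbb{Z}$ such that $(i,m)g=(i,m+t_i(g))$ for all $m\ge z_i(g)$. $S_n$ acts by $(i,m)\sigma=(i\sigma,m)$; $H_n\rtimes S_n\le\mathrm{Sym}(X_n)$ is generated by $H_n$ and these; each $g$ is uniquely $\omega_g\sigma_g$ with $\omega_g\in H_n$, $\sigma_g\in S_n$, $t_i(g):=t_i(\omega_g)$. $[i]_g$ is the orbit of $i$ under $\langle\sigma_g\rangle$, $t_{[i]}(g)=\sum_{k\in[i]_g}t_k(g)$, $I(g)=\{i:t_{[i]}(g)\ne0\}$. For $i_1\in I(g)$, $m_1\in\mathbb{N}$: $X_{i,m}(g)=\{(i,m')\in X_n: m'\equiv m\bmod|t_{[i]}(g)|\}$ and $X_{[i_1],m_1}(g)=\bigsqcup_{q=1}^{|[i_1]_g|}X_{i_q,m_q}(g)$ with $i_q=i_1\sigma_g^{q-1}$, $m_q=m_1+\sum_{d=1}^{q-1}t_{i_d}(g)$. Sets are almost equal if their symmetric difference is finite. $\sim_g$ is the equivalence relation on $\{[k]_g:k\in I(g)\}$ generated by $[i]_g\sim_g[j]_g$ whenever some $\langle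 g\rangle$-orbit is almost equal to $X_{[i],d}(g)\sqcup X_{[j],e}(g)$ for some $d,e$. $\mathfrak{C}_g([i])=\{k:[k]_g\sim_g[i]_g\}$. $g_{[i]}\in\mathrm{Sym}(X_n)$ is the product of all infinite cycles of $g$ whose support is almost equal to $X_{[j'],d}(g)\sqcup X_{[j''],e}(g)$ for some $j',j''\in\mathfrak{C}_g([i])$ and $d,e\in\mathbb{N}$ (fixing all other points). *)

theory Defs
  imports "HOL-Combinatorics.Permutations"
begin

type_synonym pt = "nat \<times> nat"
type_synonym perm = "pt \<Rightarrow> pt"

text \<open>Permutations of X_n are functions that are
bijective on X_n and the identity outside X_n. Permutations act on the right:
x (f g) = (x f) g, i.e. the product f g is the function g o f.\<close>

definition Xn :: "nat \<Rightarrow> pt set" where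
  "Xn n = {1..n} \<times> {1..}"

definition rmul :: "perm \<Rightarrow> perm \<Rightarrow> perm" where
  "rmul f g = g \<circ> f"

definition Hn :: "nat \<Rightarrow> perm set" where
  "Hn n = {g. bij_betw g (Xn n) (Xn n) \<and> (\<forall>x. x \<notin> Xn n \<longrightarrow> g x = x) \<and>
     (\<forall>i\<in>{1..n}. \<exists>z::nat. \<exists>t::int. \<forall>m\<ge>z.
        fst (g (i, m)) = i \<and> int (snd (g (i, m))) = int m + t)}"

definition sact :: "nat \<Rightarrow> (nat \<Rightarrow> nat) \<Rightarrow> perm" where
  "sact n \<sigma> = (\<lambda>(i, m). if (i, m) \<in> Xn n then (\<sigma> i, m) else (i, m))"

definition HS :: "nat \<Rightarrow> perm set" where
  "HS n = {rmul \<omega> (sact n \<sigma>) | \<omega> \<sigma>. \<omega> \<in> Hn n \<and> \<sigma> permutes {1..n}}"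

definition sig :: "nat \<Rightarrow> perm \<Rightarrow> nat \<Rightarrow> nat" where
  "sig n g = (THE \<sigma>. \<sigma> permutes {1..n} \<and> (\<exists>\<omega>\<in>Hn n. g = rmul \<omega> (sact n \<sigma>)))"

definition omg :: "nat \<Rightarrow> perm \<Rightarrow> perm" where
  "omg n g = (THE \<omega>. \<omega> \<in> Hn n \<and> (\<exists>\<sigma>. \<sigma> permutes {1..n} \<and> g = rmul \<omega> (sact n \<sigma>)))"

definition tH :: "perm \<Rightarrow> nat \<Rightarrow> int" where
  "tH \<omega> i = (THE t. \<exists>z::nat. \<forall>m\<ge>z. fst (\<omega> (i, m)) = i \<and> int (snd (\<omega> (i, m))) = int m + t)"

definition tt :: "nat \<Rightarrow> perm \<Rightarrow> nat \<Rightarrow> int" where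
  "tt n g i = tH (omg n g) i"

definition cls :: "nat \<Rightarrow> perm \<Rightarrow> nat \<Rightarrow> nat set" where
  "cls n g i = {(sig n g ^^ k) i | k. True}"

definition tcls :: "nat \<Rightarrow> perm \<Rightarrow> nat \<Rightarrow> int" where
  "tcls n g i = (\<Sum>k\<in>cls n g i. tt n g k)"

definition Ig :: "nat \<Rightarrow> perm \<Rightarrow> nat set" where
  "Ig n g = {i\<in>{1..n}. tcls n g i \<noteq> 0}"

text \<open>X_{i,m}(g) (m may be any integer here, since the m_q are integers)\<close>
definition Xim :: "nat \<Rightarrow> perm \<Rightarrow> nat \<Rightarrow> int \<Rightarrow> pt set" where
  "Xim n g i m = {(i', m') \<in> Xn n. i' = i \<and> int m' mod \<bar>tcls n g i\<bar> = m mod \<bar>tcls n g i\<bar>}"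

text \<open>X_{[i1],m1}(g); q is 0-indexed here: i_q = i1 sigma^q, m_q = m1 + sum_{d<q} t_{i1 sigma^d}\<close>
definition Xcls :: "nat \<Rightarrow> perm \<Rightarrow> nat \<Rightarrow> nat \<Rightarrow> pt set" where
  "Xcls n g i1 m1 = (\<Union>q\<in>{0..<card (cls n g i1)}.
      Xim n g ((sig n g ^^ q) i1) (int m1 + (\<Sum>d<q. tt n g ((sig n g ^^ d) i1))))"

definition almost_eq :: "'a set \<Rightarrow> 'a set \<Rightarrow> bool" where
  "almost_eq A B \<longleftrightarrow> finite ((A - B) \<union> (B - A))"

definition gorb :: "perm \<Rightarrow> pt \<Rightarrow> pt set" where
  "gorb g x = {y. \<exists>k. (g ^^ k) x = y \<or> (g ^^ k) y = x}"

definition splits :: "nat \<Rightarrow> perm \<Rightarrow> pt set \<Rightarrow> nat \<Rightarrow> nat \<Rightarrow> bool" where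
  "splits n g Orb j j' \<longleftrightarrow> (\<exists>d e. d \<ge> 1 \<and> e \<ge> 1 \<and> Xcls n g j d \<inter> Xcls n g j' e = {} \<and>
      almost_eq Orb (Xcls n g j d \<union> Xcls n g j' e))"

definition simbase :: "nat \<Rightarrow> perm \<Rightarrow> (nat set \<times> nat set) set" where
  "simbase n g = {(cls n g i, cls n g j) | i j. i \<in> Ig n g \<and> j \<in> Ig n g \<and>
      (\<exists>x\<in>Xn n. splits n g (gorb g x) i j)}"

definition simg :: "nat \<Rightarrow> perm \<Rightarrow> (nat set \<times> nat set) set" where
  "simg n g = Id_on {cls n g k | k. k \<in> Ig n g} \<union> (simbase n g \<union> (simbase n g)\<inverse>)\<^sup>+"

definition Cg :: "nat \<Rightarrow> perm \<Rightarrow> nat \<Rightarrow> nat set" where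
  "Cg n g i = {k \<in> Ig n g. (cls n g k, cls n g i) \<in> simg n g}"

text \<open>g_[i]: product of the infinite cycles of g whose support is almost equal to
X_{[j'],d} disjoint-union X_{[j''],e} with j', j'' in C_g([i]).\<close>
definition gpart :: "nat \<Rightarrow> perm \<Rightarrow> nat \<Rightarrow> perm" where
  "gpart n g i = (\<lambda>x. if x \<in> Xn n \<and> infinite (gorb g x) \<and>
       (\<exists>j\<in>Cg n g i. \<exists>j'\<in>Cg n g i. splits n g (gorb g x) j j') then g x else x)"

end

(*
  Write g = omega sigma. Far up every row r, g acts as the translation (r, m) -> (sigma r, m + t_r),
  so a far point of row k runs around the sigma-cycle [k] and its height changes by t_[k] per round.
  If t_[k] = 0 its orbit is finite. If t_[k] > 0, the forward orbit fills X_[k],m up to finitely many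
  points, while the backward orbit, being injective, eventually stays far up, where it can only move
  within a cycle [r] with t_[r] < 0 and then fills X_[r],m'; so the orbit is almost
  X_[k],m + X_[r],m' and [k] ~ [r] (symmetrically if t_[k] < 0). Hence, far up, g_[i] agrees with g
  on the rows of C_g([i]) and is the identity on all other rows, so g_[i] = omega' tau with tau the
  restriction of sigma to C_g([i]). Being g on a union of g-orbits and the identity elsewhere, g_[i]
  commutes with g.
*)

theory Submission
  imports Defs "HOL-Combinatorics.Orbits" "HOL-Combinatorics.Cycles"
begin

lemma funpow_apply_funpow: "(f ^^ a) ((f ^^ b) x) = (f ^^ (a + b)) x"
  by (simp add: funpow_add)

definition fwd_orbit :: "('a \<Rightarrow> 'a) \<Rightarrow> 'a \<Rightarrow> 'a set" where
  "fwd_orbit f x = range (\<lambda>j. (f ^^ j) x)"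

definition bwd_orbit :: "('a \<Rightarrow> 'a) \<Rightarrow> 'a \<Rightarrow> 'a set" where
  "bwd_orbit f x = {y. \<exists>j. (f ^^ j) y = x}"

lemma gorb_eq_fwd_bwd: "gorb g x = fwd_orbit g x \<union> bwd_orbit g x"
  unfolding gorb_def fwd_orbit_def bwd_orbit_def by blast

lemma gorb_apply:
  assumes "inj g"
  shows "gorb g (g x) = gorb g x"
proof -
  have "y \<in> gorb g x" if "(g ^^ k) y = g x" for y k
  proof (cases k)
    case 0
    then have "(g ^^ 1) x = y" using that by simp
    then show ?thesis unfolding gorb_def by blast
  next
    case (Suc k')
    then have "(g ^^ k') y = x" using that injD[OF assms] by (simp add: funpow_swap1[symmetric])
    then show ?thesis unfolding gorb_def by blast
  qed
  moreover have "y \<in> gorb g (g x)" if "(g ^^ k) x = y" for y k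
  proof (cases k)
    case 0
    then have "(g ^^ 1) y = g x" using that by simp
    then show ?thesis unfolding gorb_def by blast
  next
    case (Suc k')
    then have "(g ^^ k') (g x) = y" using that by (simp add: funpow_swap1)
    then show ?thesis unfolding gorb_def by blast
  qed
  moreover have "(g ^^ Suc k) x = y" if "(g ^^ k) (g x) = y" for y k
    using that by (simp add: funpow_swap1)
  moreover have "(g ^^ Suc k) y = g x" if "(g ^^ k) y = x" for y k
    using that by simp
  ultimately show ?thesis unfolding gorb_def by blast
qed

lemma finite_gorb_if_periodic:
  assumes "inj g" and "(g ^^ p) x = x" and "p > 0"
  shows "finite (gorb g x)"
proof -
  have "gorb g x \<subseteq> (\<lambda>i. (g ^^ i) x) ` {..<p}"
  proof
    fix y assume "y \<in> gorb g x"
    then obtain j where "y = (g ^^ j) x \<or> (g ^^ j) y = x" unfolding gorb_def by blast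
    moreover have "y = (g ^^ ((p - 1) * j)) x" if "(g ^^ j) y = x"
    proof -
      have "(g ^^ j) ((g ^^ ((p - 1) * j)) x) = (g ^^ (p * j)) x"
        using \<open>p > 0\<close> by (simp add: funpow_apply_funpow mult_eq_if)
      also have "\<dots> = x" using funpow_mod_eq[OF assms(2), of "p * j"] by simp
      finally show ?thesis using that inj_fn[OF assms(1), of j] by (metis injD)
    qed
    ultimately obtain j where "y = (g ^^ j) x" by blast
    then have "y = (g ^^ (j mod p)) x" using funpow_mod_eq[OF assms(2)] by simp
    then show "y \<in> (\<lambda>i. (g ^^ i) x) ` {..<p}" using \<open>p > 0\<close> by simp
  qed
  then show ?thesis by (rule finite_subset) simp
qed

lemma inj_funpow_orbit:
  assumes "inj g" and "\<forall>p>0. (g ^^ p) x \<noteq> x"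
  shows "inj (\<lambda>j. (g ^^ j) x)"
proof -
  have neq: "(g ^^ a) x \<noteq> (g ^^ c) x" if "a < c" for a c
  proof
    assume "(g ^^ a) x = (g ^^ c) x"
    also have "(g ^^ c) x = (g ^^ a) ((g ^^ (c - a)) x)"
      using that by (simp add: funpow_apply_funpow)
    finally have "(g ^^ (c - a)) x = x" using inj_fn[OF assms(1), of a] by (metis injD)
    then show False using assms(2) that by simp
  qed
  show ?thesis
    by (rule injI) (use neq in \<open>metis linorder_neqE_nat\<close>)
qed

lemma funpow_inv_funpow_self:
  fixes g :: "'a \<Rightarrow> 'a"
  assumes "bij g"
  shows "(g ^^ k) (inv (g ^^ k) x) = x"
  using bij_is_surj[OF bij_fn[OF assms]] by (rule surj_f_inv_f)

lemma funpow_inv_funpow: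
  assumes "bij g" and "i \<le> j"
  shows "(g ^^ i) (inv (g ^^ j) x) = inv (g ^^ (j - i)) x"
proof -
  have "(g ^^ (j - i)) ((g ^^ i) (inv (g ^^ j) x)) = (g ^^ (j - i)) (inv (g ^^ (j - i)) x)"
    using assms by (simp add: funpow_apply_funpow funpow_inv_funpow_self)
  then show ?thesis using inj_fn[OF bij_is_inj[OF assms(1)]] by (metis injD)
qed

lemma inj_inv_funpow_orbit:
  assumes "bij g" and "\<forall>p>0. (g ^^ p) x \<noteq> x"
  shows "inj (\<lambda>j. inv (g ^^ j) x)"
proof -
  have neq: "inv (g ^^ a) x \<noteq> inv (g ^^ c) x" if "a < c" for a c
  proof
    assume e: "inv (g ^^ a) x = inv (g ^^ c) x"
    have "x = (g ^^ c) (inv (g ^^ c) x)" using funpow_inv_funpow_self[OF assms(1)] by simp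
    also have "\<dots> = (g ^^ (c - a)) ((g ^^ a) (inv (g ^^ a) x))"
      using e that by (simp add: funpow_apply_funpow)
    also have "\<dots> = (g ^^ (c - a)) x" using funpow_inv_funpow_self[OF assms(1)] by simp
    finally have "(g ^^ (c - a)) x = x" ..
    then show False using assms(2) that by simp
  qed
  show ?thesis
    by (rule injI) (use neq in \<open>metis linorder_neqE_nat\<close>)
qed

lemma fwd_orbit_funpow_subset: "(g ^^ K) x = y \<Longrightarrow> fwd_orbit g y \<subseteq> fwd_orbit g x"
  unfolding fwd_orbit_def by (auto simp: funpow_apply_funpow)

lemma finite_fwd_orbit_diff_funpow:
  assumes "(g ^^ K) x = y"
  shows "finite (fwd_orbit g x - fwd_orbit g y)"
proof -
  have tail: "(g ^^ j) x \<in> fwd_orbit g y" if "j \<ge> K" for j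
  proof -
    have "(g ^^ j) x = (g ^^ (j - K)) y"
      using that assms[symmetric] funpow_apply_funpow[where f = g and a = "j - K" and b = K] by simp
    then show ?thesis unfolding fwd_orbit_def by simp
  qed
  have "fwd_orbit g x - fwd_orbit g y \<subseteq> (\<lambda>j. (g ^^ j) x) ` {..<K}"
  proof
    fix w assume w: "w \<in> fwd_orbit g x - fwd_orbit g y"
    then obtain j where j: "w = (g ^^ j) x" unfolding fwd_orbit_def by blast
    then have "j < K" using w tail by (meson DiffD2 not_le)
    then show "w \<in> (\<lambda>j. (g ^^ j) x) ` {..<K}" using j by simp
  qed
  then show ?thesis by (rule finite_subset) simp
qed

lemma bwd_orbit_funpow_subset: "(g ^^ K) z = x \<Longrightarrow> bwd_orbit g z \<subseteq> bwd_orbit g x"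
  unfolding bwd_orbit_def by (auto simp: funpow_apply_funpow)

lemma finite_bwd_orbit_diff_funpow:
  assumes "inj g" and "(g ^^ K) z = x"
  shows "finite (bwd_orbit g x - bwd_orbit g z)"
proof -
  have tail: "w \<in> bwd_orbit g z" if "(g ^^ j) w = x" "j \<ge> K" for w j
  proof -
    have "(g ^^ K) ((g ^^ (j - K)) w) = (g ^^ K) z"
      using that assms(2) funpow_apply_funpow[where f = g and a = K and b = "j - K"] by simp
    then have "(g ^^ (j - K)) w = z" using inj_fn[OF assms(1)] by (metis injD)
    then show ?thesis unfolding bwd_orbit_def by blast
  qed
  have "bwd_orbit g x - bwd_orbit g z \<subseteq> (\<Union>j<K. (g ^^ j) -` {x})"
  proof
    fix w assume w: "w \<in> bwd_orbit g x - bwd_orbit g z"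
    then obtain j where j: "(g ^^ j) w = x" unfolding bwd_orbit_def by blast
    have "j < K" using tail[OF j] w by (meson DiffD2 not_le)
    then show "w \<in> (\<Union>j<K. (g ^^ j) -` {x})" using j by blast
  qed
  moreover have "finite (\<Union>j<K. (g ^^ j) -` {x})"
    using inj_fn[OF assms(1)] by (blast intro: finite_vimageI)
  ultimately show ?thesis by (rule finite_subset)
qed

lemma almost_eq_gorb_union:
  assumes "inj g" and "(g ^^ K) x = y" and "(g ^^ K') z = x"
    and "fwd_orbit g y \<subseteq> A" "finite (A - fwd_orbit g y)"
    and "bwd_orbit g z \<subseteq> A'" "finite (A' - bwd_orbit g z)"
  shows "almost_eq (gorb g x) (A \<union> A')"
proof -
  have "gorb g x - (A \<union> A') \<subseteq> (fwd_orbit g x - fwd_orbit g y) \<union> (bwd_orbit g x - bwd_orbit g z)"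
    using assms(4,6) unfolding gorb_eq_fwd_bwd by blast
  then have "finite (gorb g x - (A \<union> A'))"
    using finite_fwd_orbit_diff_funpow[OF assms(2)] finite_bwd_orbit_diff_funpow[OF assms(1,3)]
    by (meson finite_UnI finite_subset)
  moreover have "(A \<union> A') - gorb g x \<subseteq> (A - fwd_orbit g y) \<union> (A' - bwd_orbit g z)"
    using fwd_orbit_funpow_subset[OF assms(2)] bwd_orbit_funpow_subset[OF assms(3)]
    unfolding gorb_eq_fwd_bwd by blast
  then have "finite ((A \<union> A') - gorb g x)" using assms(5,7) by (meson finite_UnI finite_subset)
  ultimately show ?thesis unfolding almost_eq_def by simp
qed

lemma eq_add_mult_if_mod_eq:
  fixes b c P :: int
  assumes "P > 0" and "b mod P = c mod P" and "c \<le> b"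
  shows "\<exists>p::nat. b = c + int p * P"
proof -
  obtain q where q: "b - c = P * q" using assms(2) by (metis mod_eq_dvd_iff dvdE)
  then have "q \<ge> 0" using assms(1,3) by (metis diff_ge_0_iff_ge zero_le_mult_iff not_less)
  then show ?thesis using q by (intro exI[of _ "nat q"]) (simp add: algebra_simps)
qed

lemma permutes_perm_restrict:
  assumes \<sigma>: "\<sigma> permutes S" and "finite S" and "A \<subseteq> S" and A: "\<And>x. x \<in> A \<Longrightarrow> \<sigma> x \<in> A"
  shows "perm_restrict \<sigma> A permutes S"
proof (rule bij_imp_permutes)
  let ?\<tau> = "perm_restrict \<sigma> A"
  have sub: "?\<tau> ` S \<subseteq> S" using permutes_in_image[OF \<sigma>] by (auto simp: perm_restrict_def)
  have inj: "inj_on ?\<tau> S"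
  proof (rule inj_onI)
    fix x y assume "?\<tau> x = ?\<tau> y"
    then show "x = y" using A permutes_inj[OF \<sigma>]
      by (cases "x \<in> A"; cases "y \<in> A") (auto simp: perm_restrict_def dest: injD)
  qed
  show "bij_betw ?\<tau> S S" using endo_inj_surj[OF assms(2) sub inj] inj by (simp add: bij_betw_def)
  show "x \<notin> S \<Longrightarrow> ?\<tau> x = x" for x using assms(3) by (auto simp: perm_restrict_def)
qed

lemma bij_betw_if_invariant:
  assumes g: "bij_betw g A A" and P: "\<And>x. x \<in> A \<Longrightarrow> P (g x) \<longleftrightarrow> P x"
  shows "bij_betw (\<lambda>x. if P x then g x else x) A A"
proof -
  let ?S = "{x \<in> A. P x}" and ?f = "\<lambda>x. if P x then g x else x"
  have "g ` ?S = ?S"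
  proof
    show "g ` ?S \<subseteq> ?S" using P bij_betw_apply[OF g] by auto
    show "?S \<subseteq> g ` ?S"
    proof
      fix y assume y: "y \<in> ?S"
      then obtain x where "x \<in> A" "g x = y" using g by (metis bij_betw_imp_surj_on imageE mem_Collect_eq)
      then show "y \<in> g ` ?S" using P y by auto
    qed
  qed
  then have "bij_betw ?f ?S ?S"
    using bij_betw_subset[OF g, of ?S] by (subst bij_betw_cong[where g = g]) auto
  moreover have "bij_betw ?f (A - ?S) (A - ?S)"
    using bij_betw_id[of "A - ?S"] by (subst bij_betw_cong[where g = id]) auto
  ultimately have "bij_betw ?f (?S \<union> (A - ?S)) (?S \<union> (A - ?S))" by (rule bij_betw_combine) blast
  moreover have "?S \<union> (A - ?S) = A" by blast
  ultimately show ?thesis by simp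
qed

lemma mem_Xn_iff: "(a, b) \<in> Xn n \<longleftrightarrow> a \<in> {1..n} \<and> b \<ge> 1"
  by (auto simp: Xn_def)

lemma sact_apply_Xn: "x \<in> Xn n \<Longrightarrow> sact n \<sigma> x = (\<sigma> (fst x), snd x)"
  by (cases x) (auto simp: sact_def)

lemma sact_apply_outside: "x \<notin> Xn n \<Longrightarrow> sact n \<sigma> x = x"
  by (cases x) (auto simp: sact_def)

lemma sact_in_Xn:
  assumes "\<sigma> permutes {1..n}" and "x \<in> Xn n"
  shows "sact n \<sigma> x \<in> Xn n"
proof -
  have "fst x \<in> {1..n}" using assms(2) by (cases x) (simp add: mem_Xn_iff)
  then have "\<sigma> (fst x) \<in> {1..n}" using permutes_in_image[OF assms(1)] by blast
  then show ?thesis using assms(2) by (cases x) (simp add: sact_apply_Xn mem_Xn_iff)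
qed

lemma sact_comp:
  assumes "\<tau> permutes {1..n}"
  shows "sact n \<sigma> (sact n \<tau> x) = sact n (\<sigma> \<circ> \<tau>) x"
proof (cases "x \<in> Xn n")
  case True
  then show ?thesis
    using sact_in_Xn[OF assms True] by (simp add: sact_apply_Xn del: prod.collapse)
qed (simp add: sact_apply_outside)

lemma sact_id: "sact n id x = x"
  by (cases x) (auto simp: sact_def)

lemma sact_inv_sact: "\<sigma> permutes {1..n} \<Longrightarrow> sact n (inv \<sigma>) (sact n \<sigma> x) = x"
  by (simp add: sact_comp permutes_inv_o(2) sact_id)

lemma sact_sact_inv: "\<sigma> permutes {1..n} \<Longrightarrow> sact n \<sigma> (sact n (inv \<sigma>) x) = x"
  by (simp add: sact_comp permutes_inv permutes_inv_o(1) sact_id)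

lemma inj_sact: "\<sigma> permutes {1..n} \<Longrightarrow> inj (sact n \<sigma>)"
  by (metis injI sact_inv_sact)

lemma bij_betw_sact: "\<sigma> permutes {1..n} \<Longrightarrow> bij_betw (sact n \<sigma>) (Xn n) (Xn n)"
  by (rule bij_betw_byWitness[where f' = "sact n (inv \<sigma>)"])
    (auto simp: sact_inv_sact sact_sact_inv sact_in_Xn permutes_inv)

lemma tH_eqI:
  assumes "\<forall>m\<ge>z. fst (\<omega> (r, m)) = r \<and> int (snd (\<omega> (r, m))) = int m + s"
  shows "tH \<omega> r = s"
  unfolding tH_def
proof (rule the_equality)
  show "\<exists>z. \<forall>m\<ge>z. fst (\<omega> (r, m)) = r \<and> int (snd (\<omega> (r, m))) = int m + s" using assms by blast
next
  fix s' assume "\<exists>z'. \<forall>m\<ge>z'. fst (\<omega> (r, m)) = r \<and> int (snd (\<omega> (r, m))) = int m + s'"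
  then obtain z' where "\<forall>m\<ge>z'. int (snd (\<omega> (r, m))) = int m + s'" by blast
  with assms have "int (max z z') + s' = int (max z z') + s" by (metis max.cobounded1 max.cobounded2)
  then show "s' = s" by simp
qed

lemma Hn_eventually_translation:
  assumes "\<omega> \<in> Hn n" and "r \<in> {1..n}"
  shows "\<exists>z. \<forall>m\<ge>z. fst (\<omega> (r, m)) = r \<and> int (snd (\<omega> (r, m))) = int m + tH \<omega> r"
proof -
  obtain z s where "\<forall>m\<ge>z. fst (\<omega> (r, m)) = r \<and> int (snd (\<omega> (r, m))) = int m + s"
    using assms unfolding Hn_def by blast
  with tH_eqI[OF this] show ?thesis by blast
qed

lemma Hn_in_Xn: "\<omega> \<in> Hn n \<Longrightarrow> x \<in> Xn n \<Longrightarrow> \<omega> x \<in> Xn n"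
  unfolding Hn_def by (auto dest: bij_betw_apply)

lemma HS_decomp_unique:
  assumes \<omega>1: "\<omega>1 \<in> Hn n" and \<omega>2: "\<omega>2 \<in> Hn n"
    and \<sigma>1: "\<sigma>1 permutes {1..n}" and \<sigma>2: "\<sigma>2 permutes {1..n}"
    and eq: "rmul \<omega>1 (sact n \<sigma>1) = rmul \<omega>2 (sact n \<sigma>2)"
  shows "\<sigma>1 = \<sigma>2 \<and> \<omega>1 = \<omega>2"
proof -
  have eq': "sact n \<sigma>1 (\<omega>1 x) = sact n \<sigma>2 (\<omega>2 x)" for x
    using eq unfolding rmul_def by (metis comp_apply)
  have "\<sigma>1 r = \<sigma>2 r" if r: "r \<in> {1..n}" for r
  proof -
    obtain z1 z2 where
      z1: "\<forall>m\<ge>z1. fst (\<omega>1 (r, m)) = r" and z2: "\<forall>m\<ge>z2. fst (\<omega>2 (r, m)) = r"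
      using Hn_eventually_translation[OF \<omega>1 r] Hn_eventually_translation[OF \<omega>2 r] by blast
    define m where "m = max z1 z2 + 1"
    have "(r, m) \<in> Xn n" using r by (simp add: mem_Xn_iff m_def)
    then have "\<sigma>1 (fst (\<omega>1 (r, m))) = \<sigma>2 (fst (\<omega>2 (r, m)))"
      using eq'[of "(r, m)"] Hn_in_Xn[OF \<omega>1] Hn_in_Xn[OF \<omega>2] by (simp add: sact_apply_Xn)
    then show ?thesis using z1 z2 by (simp add: m_def)
  qed
  then have "\<sigma>1 = \<sigma>2" using \<sigma>1 \<sigma>2 by (metis permutes_not_in ext)
  moreover have "\<omega>1 = \<omega>2"
    using eq' \<open>\<sigma>1 = \<sigma>2\<close> inj_sact[OF \<sigma>2] by (auto simp: inj_eq)
  ultimately show ?thesis by simp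
qed

lemma HS_decomp:
  assumes "g \<in> HS n"
  shows "sig n g permutes {1..n}" "omg n g \<in> Hn n" "g = rmul (omg n g) (sact n (sig n g))"
proof -
  obtain \<omega> \<sigma> where ws: "g = rmul \<omega> (sact n \<sigma>)" "\<omega> \<in> Hn n" "\<sigma> permutes {1..n}"
    using assms unfolding HS_def by blast
  have "sig n g = \<sigma>" unfolding sig_def
    by (rule the_equality) (use ws HS_decomp_unique in blast)+
  moreover have "omg n g = \<omega>" unfolding omg_def
    by (rule the_equality) (use ws HS_decomp_unique in blast)+
  ultimately show "sig n g permutes {1..n}" "omg n g \<in> Hn n" "g = rmul (omg n g) (sact n (sig n g))"
    using ws by auto
qed

locale hs_elem =
  fixes n :: nat and g :: perm
  assumes in_HS: "g \<in> HS n"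
begin

abbreviation "sg \<equiv> sig n g"
abbreviation "t \<equiv> tt n g"

lemma sg_permutes: "sg permutes {1..n}"
  using HS_decomp[OF in_HS] by simp

lemma sg_funpow_in: "r \<in> {1..n} \<Longrightarrow> (sg ^^ k) r \<in> {1..n}"
  using permutes_in_image[OF permutes_funpow[OF sg_permutes]] by blast

lemma g_eq_sact_omg: "g x = sact n sg (omg n g x)"
  using HS_decomp[OF in_HS] by (metis comp_apply rmul_def)

lemma g_outside:
  assumes "x \<notin> Xn n"
  shows "g x = x"
proof -
  have "omg n g x = x" using HS_decomp(2)[OF in_HS] assms unfolding Hn_def by blast
  then show ?thesis using g_eq_sact_omg[of x] sact_apply_outside[OF assms] by simp
qed

lemma bij_betw_g: "bij_betw g (Xn n) (Xn n)"
proof -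
  have "bij_betw (sact n sg \<circ> omg n g) (Xn n) (Xn n)"
    using HS_decomp(2)[OF in_HS] bij_betw_sact[OF sg_permutes] unfolding Hn_def
    by (auto intro: bij_betw_trans)
  moreover have "sact n sg \<circ> omg n g = g" using g_eq_sact_omg by auto
  ultimately show ?thesis by simp
qed

lemma bij_g: "bij g"
proof -
  have "bij_betw g (Xn n \<union> - Xn n) (Xn n \<union> - Xn n)"
  proof (rule bij_betw_combine[OF bij_betw_g])
    show "bij_betw g (- Xn n) (- Xn n)"
      using bij_betw_id[of "- Xn n"] g_outside by (subst bij_betw_cong[where g = id]) auto
  qed auto
  then show ?thesis by simp
qed

lemma inj_g: "inj g"
  using bij_g bij_is_inj by blast

lemma g_in_Xn_iff: "g x \<in> Xn n \<longleftrightarrow> x \<in> Xn n"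
  using bij_betw_apply[OF bij_betw_g] g_outside by metis

lemma funpow_in_Xn_iff: "(g ^^ k) x \<in> Xn n \<longleftrightarrow> x \<in> Xn n"
  by (induct k) (auto simp: g_in_Xn_iff)

lemma eventually_translation:
  "\<exists>Z\<ge>1. \<forall>r\<in>{1..n}. \<forall>m\<ge>Z. g (r, m) = (sg r, nat (int m + t r)) \<and> int m + t r \<ge> 1"
proof -
  have \<omega>: "omg n g \<in> Hn n" using HS_decomp[OF in_HS] by simp
  obtain zf where zf: "\<And>r m. r \<in> {1..n} \<Longrightarrow> m \<ge> zf r \<Longrightarrow>
      fst (omg n g (r, m)) = r \<and> int (snd (omg n g (r, m))) = int m + t r"
    using Hn_eventually_translation[OF \<omega>] unfolding tt_def by metis
  define Z where "Z = Suc (\<Sum>r\<in>{1..n}. zf r)"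
  have "g (r, m) = (sg r, nat (int m + t r)) \<and> int m + t r \<ge> 1"
    if r: "r \<in> {1..n}" and m: "Z \<le> m" for r m
  proof -
    have "zf r \<le> (\<Sum>r\<in>{1..n}. zf r)" using r by (intro member_le_sum) auto
    then obtain m' where \<omega>rm: "omg n g (r, m) = (r, m')" "int m' = int m + t r"
      using zf[OF r] m unfolding Z_def by (metis le_SucI order_trans prod.collapse)
    have "(r, m) \<in> Xn n" using r m by (simp add: mem_Xn_iff Z_def)
    then have "(r, m') \<in> Xn n" using Hn_in_Xn[OF \<omega>] \<omega>rm by metis
    then show ?thesis
      using g_eq_sact_omg[of "(r, m)"] \<omega>rm by (simp add: sact_apply_Xn mem_Xn_iff)
  qed
  then show ?thesis unfolding Z_def by (intro exI[of _ Z]) (auto simp: Z_def)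
qed

abbreviation cyc_len :: "nat \<Rightarrow> nat" where
  "cyc_len r \<equiv> card (cls n g r)"

definition drift :: "nat \<Rightarrow> nat \<Rightarrow> int" where
  "drift r k = (\<Sum>d<k. t ((sg ^^ d) r))"

lemma permutation_sg: "permutation sg"
  using permutes_imp_permutation[OF _ sg_permutes] by simp

lemma cls_eq_orbit: "cls n g r = orbit sg r"
  unfolding cls_def orbit_altdef_permutation[OF permutation_sg] by simp

lemma self_in_orbit_sg: "r \<in> orbit sg r"
  using permutation_self_in_orbit[OF permutation_sg] .

lemma cls_eq_image_funpow_dist1: "cls n g r = (\<lambda>k. (sg ^^ k) r) ` {..<funpow_dist1 sg r r}"
  unfolding cls_eq_orbit
  using orbit_conv_funpow_dist1[OF self_in_orbit_sg] by (simp add: atLeast0LessThan)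

lemma cyc_len_eq_funpow_dist1: "cyc_len r = funpow_dist1 sg r r"
  unfolding cls_eq_image_funpow_dist1
  using card_image[OF inj_on_funpow_dist1[OF self_in_orbit_sg]] by (simp add: atLeast0LessThan)

lemma cls_eq_image: "cls n g r = (\<lambda>k. (sg ^^ k) r) ` {..<cyc_len r}"
  using cls_eq_image_funpow_dist1 cyc_len_eq_funpow_dist1 by simp

lemma inj_on_funpow_cyc_len: "inj_on (\<lambda>k. (sg ^^ k) r) {..<cyc_len r}"
  using inj_on_funpow_dist1[OF self_in_orbit_sg] cyc_len_eq_funpow_dist1
  by (simp add: atLeast0LessThan)

lemma cyc_len_pos: "cyc_len r > 0"
  using cyc_len_eq_funpow_dist1 by simp

lemma funpow_cyc_len: "(sg ^^ cyc_len r) r = r"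
  using funpow_dist1_prop[OF self_in_orbit_sg] cyc_len_eq_funpow_dist1 by simp

lemma funpow_in_cls: "(sg ^^ k) r \<in> cls n g r"
  unfolding cls_def by blast

lemma cls_eq_if_mem:
  assumes "s \<in> cls n g r"
  shows "cls n g s = cls n g r"
proof -
  have s: "s \<in> orbit sg r" using assms cls_eq_orbit by simp
  have r: "r \<in> orbit sg s" using orbit_swap[OF self_in_orbit_sg s] .
  show ?thesis unfolding cls_eq_orbit using orbit_trans[OF _ s] orbit_trans[OF _ r] by blast
qed

lemma cls_subset: "r \<in> {1..n} \<Longrightarrow> cls n g r \<subseteq> {1..n}"
  unfolding cls_def using sg_funpow_in by blast

lemma cyc_len_le: "r \<in> {1..n} \<Longrightarrow> cyc_len r \<le> n"
  using card_mono[OF _ cls_subset] by simp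

lemma funpow_mod_cyc_len: "(sg ^^ (k mod cyc_len r)) r = (sg ^^ k) r"
  by (rule funpow_mod_eq[OF funpow_cyc_len])

lemma funpow_mult_cyc_len: "(sg ^^ (p * cyc_len r)) r = r"
  using funpow_mod_cyc_len[of "p * cyc_len r" r] by simp

lemma tcls_eq_if_mem: "s \<in> cls n g r \<Longrightarrow> tcls n g s = tcls n g r"
  unfolding tcls_def using cls_eq_if_mem by simp

lemma tcls_eq_drift: "tcls n g r = drift r (cyc_len r)"
  unfolding tcls_def drift_def
  by (subst cls_eq_image) (simp add: sum.reindex[OF inj_on_funpow_cyc_len])

lemma drift_Suc: "drift r (Suc k) = drift r k + t ((sg ^^ k) r)"
  unfolding drift_def by simp

lemma drift_add: "drift r (a + b) = drift r a + drift ((sg ^^ a) r) b"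
  by (induct b) (simp_all add: drift_def funpow_apply_funpow add.commute)

lemma drift_period: "drift r (p * cyc_len r + q) = int p * tcls n g r + drift r q"
proof (induct p)
  case (Suc p)
  have "drift r (Suc p * cyc_len r + q) = drift r (cyc_len r + (p * cyc_len r + q))"
    by (simp add: add.assoc)
  also have "\<dots> = tcls n g r + drift r (p * cyc_len r + q)"
    by (simp only: drift_add funpow_cyc_len tcls_eq_drift)
  finally show ?case using Suc by (simp add: algebra_simps)
qed simp

lemma drift_mult_cyc_len: "drift r (p * cyc_len r) = int p * tcls n g r"
  using drift_period[of r p 0] by (simp add: drift_def)

lemma drift_div_mod:
  "drift r k = int (k div cyc_len r) * tcls n g r + drift r (k mod cyc_len r)"
  using drift_period[of r "k div cyc_len r" "k mod cyc_len r"] by simp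

lemma drift_mod:
  "drift r k mod \<bar>tcls n g r\<bar> = drift r (k mod cyc_len r) mod \<bar>tcls n g r\<bar>"
proof -
  have "int (k div cyc_len r) * tcls n g r mod \<bar>tcls n g r\<bar> = 0" by (simp add: abs_if)
  then show ?thesis using drift_div_mod[of r k] by (metis mod_add_left_eq add.left_neutral)
qed

definition drift_bound :: int where
  "drift_bound = int n * (\<Sum>k\<in>{1..n}. \<bar>t k\<bar>)"

lemma drift_bound_nonneg: "drift_bound \<ge> 0"
  unfolding drift_bound_def by (simp add: sum_nonneg)

lemma abs_drift_within_cycle:
  assumes r: "r \<in> {1..n}" and q: "q < cyc_len r"
  shows "\<bar>drift r q\<bar> \<le> drift_bound"
proof -
  let ?M = "\<Sum>k\<in>{1..n}. \<bar>t k\<bar>"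
  have "\<bar>drift r k\<bar> \<le> int k * ?M" for k
  proof (induct k)
    case (Suc k)
    have "\<bar>t ((sg ^^ k) r)\<bar> \<le> ?M" using sg_funpow_in[OF r] by (intro member_le_sum) auto
    then show ?case using Suc by (simp add: drift_Suc algebra_simps abs_triangle_ineq[THEN order_trans])
  qed (simp add: drift_def)
  moreover have "int q * ?M \<le> int n * ?M"
    using q cyc_len_le[OF r] by (intro mult_right_mono) (auto simp: sum_nonneg)
  ultimately show ?thesis unfolding drift_bound_def by (meson order_trans)
qed

lemma drift_lower:
  assumes "r \<in> {1..n}"
  shows "drift r k \<ge> int (k div cyc_len r) * tcls n g r - drift_bound"
  using abs_drift_within_cycle[OF assms, of "k mod cyc_len r"] cyc_len_pos drift_div_mod[of r k]
  by simp

lemma mem_Xcls_iff: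
  assumes r: "r \<in> {1..n}"
  shows "(a, b) \<in> Xcls n g r e \<longleftrightarrow> b \<ge> 1 \<and>
    (\<exists>q<cyc_len r. a = (sg ^^ q) r \<and> int b mod \<bar>tcls n g r\<bar> = (int e + drift r q) mod \<bar>tcls n g r\<bar>)"
proof -
  have "tcls n g ((sg ^^ q) r) = tcls n g r" for q using tcls_eq_if_mem[OF funpow_in_cls] .
  then show ?thesis
    unfolding Xcls_def Xim_def drift_def[symmetric] using sg_funpow_in[OF r] by (auto simp: mem_Xn_iff)
qed

lemma Xcls_row_in_cls: "(a, b) \<in> Xcls n g r e \<Longrightarrow> a \<in> cls n g r"
  unfolding Xcls_def Xim_def using funpow_in_cls by auto

lemma mem_XclsI:
  assumes r: "r \<in> {1..n}" and "b \<ge> 1"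
    and "int b mod \<bar>tcls n g r\<bar> = (int e + drift r k) mod \<bar>tcls n g r\<bar>"
  shows "((sg ^^ k) r, b) \<in> Xcls n g r e"
proof -
  have "(int e + drift r k) mod \<bar>tcls n g r\<bar> = (int e + drift r (k mod cyc_len r)) mod \<bar>tcls n g r\<bar>"
    using drift_mod[of r k] by (metis mod_add_right_eq)
  then show ?thesis unfolding mem_Xcls_iff[OF r]
    using assms(2,3) cyc_len_pos funpow_mod_cyc_len[of k r] by (metis mod_less_divisor)
qed

lemma infinite_Xcls:
  assumes r: "r \<in> {1..n}" and "tcls n g r \<noteq> 0" and "e \<ge> 1"
  shows "infinite (Xcls n g r e)"
proof -
  define f where "f p = (r, e + p * nat \<bar>tcls n g r\<bar>)" for p
  have "inj f" unfolding f_def using assms(2) by (auto intro!: injI)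
  moreover have "range f \<subseteq> Xcls n g r e"
    using mem_XclsI[OF r, of _ e 0] assms(3) by (auto simp: f_def drift_def)
  ultimately show ?thesis using infinite_UNIV_nat finite_imageD infinite_super by blast
qed

lemma Xcls_disjoint_if_tcls_ne:
  assumes "tcls n g k \<noteq> tcls n g r"
  shows "Xcls n g k e \<inter> Xcls n g r e' = {}"
  using assms Xcls_row_in_cls tcls_eq_if_mem cls_eq_if_mem by (metis disjoint_iff prod.collapse)

lemma Cg_subset: "j \<in> Cg n g i \<Longrightarrow> j \<in> {1..n} \<and> tcls n g j \<noteq> 0"
  unfolding Cg_def Ig_def by blast

lemma Cg_cls_closed:
  assumes j: "j \<in> Cg n g i" and a: "a \<in> cls n g j"
  shows "a \<in> Cg n g i"
proof -
  have "a \<in> {1..n}" using Cg_subset[OF j] cls_subset a by blast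
  moreover have "tcls n g a \<noteq> 0" using Cg_subset[OF j] tcls_eq_if_mem[OF a] by simp
  ultimately
  show ?thesis using j cls_eq_if_mem[OF a] unfolding Cg_def Ig_def by simp
qed

lemma Xcls_disjoint_Cg:
  assumes "k \<notin> Cg n g i" and "j \<in> Cg n g i"
  shows "Xcls n g k m \<inter> Xcls n g j d = {}"
proof -
  have "a \<notin> cls n g j" if "a \<in> cls n g k" for a
    using assms Cg_cls_closed cls_eq_if_mem[OF that] self_in_orbit_sg by (metis cls_eq_orbit)
  then show ?thesis using Xcls_row_in_cls by (metis disjoint_iff prod.collapse)
qed

lemma simg_extend:
  assumes "(a, b) \<in> simbase n g \<or> (b, a) \<in> simbase n g" and "(b, c) \<in> simg n g"
  shows "(a, c) \<in> simg n g"
proof -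
  let ?R = "simbase n g \<union> (simbase n g)\<inverse>"
  have "(a, b) \<in> ?R" using assms(1) by blast
  moreover have "b = c \<or> (b, c) \<in> ?R\<^sup>+" using assms(2) unfolding simg_def by (auto simp: Id_on_def)
  ultimately have "(a, c) \<in> ?R\<^sup>+" by (meson r_into_trancl trancl_into_trancl2)
  then show ?thesis unfolding simg_def by blast
qed

definition in_gpart_supp :: "nat \<Rightarrow> pt \<Rightarrow> bool" where
  "in_gpart_supp i x \<longleftrightarrow> x \<in> Xn n \<and> infinite (gorb g x) \<and>
     (\<exists>j\<in>Cg n g i. \<exists>j'\<in>Cg n g i. splits n g (gorb g x) j j')"

lemma gpart_apply: "gpart n g i x = (if in_gpart_supp i x then g x else x)"
  unfolding gpart_def in_gpart_supp_def by simp

lemma in_gpart_supp_apply: "in_gpart_supp i (g x) \<longleftrightarrow> in_gpart_supp i x"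
  unfolding in_gpart_supp_def gorb_apply[OF inj_g] g_in_Xn_iff ..

lemma gpart_commute: "rmul (gpart n g i) g = rmul g (gpart n g i)"
  unfolding rmul_def by (rule ext) (simp add: gpart_apply in_gpart_supp_apply)

lemma bij_betw_gpart: "bij_betw (gpart n g i) (Xn n) (Xn n)"
  unfolding gpart_apply[abs_def]
  by (rule bij_betw_if_invariant[OF bij_betw_g]) (rule in_gpart_supp_apply)

end

locale hs_far = hs_elem +
  fixes Z :: nat
  assumes Z_pos: "Z \<ge> 1"
    and translation: "r \<in> {1..n} \<Longrightarrow> m \<ge> Z \<Longrightarrow>
      g (r, m) = (sg r, nat (int m + t r)) \<and> int m + t r \<ge> 1"
begin

definition far_level :: int where
  "far_level = int Z + drift_bound"

lemma far_level_ge: "int m \<ge> far_level \<Longrightarrow> m \<ge> Z \<and> m \<ge> 1"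
  unfolding far_level_def using drift_bound_nonneg Z_pos by linarith

lemma funpow_translation_step:
  assumes s: "s \<in> {1..n}" and "int m + drift s k \<ge> int Z"
    and "(g ^^ k) (s, m) = ((sg ^^ k) s, nat (int m + drift s k))"
  shows "(g ^^ Suc k) (s, m) = ((sg ^^ Suc k) s, nat (int m + drift s (Suc k)))
    \<and> int m + drift s (Suc k) \<ge> 1"
proof -
  have "nat (int m + drift s k) \<ge> Z" using assms(2) by linarith
  from translation[OF sg_funpow_in[OF s] this] assms(2,3) Z_pos show ?thesis
    by (simp add: drift_Suc algebra_simps)
qed

lemma funpow_translation:
  assumes s: "s \<in> {1..n}" and "m \<ge> 1" and "\<forall>i<k. int m + drift s i \<ge> int Z"
  shows "(g ^^ k) (s, m) = ((sg ^^ k) s, nat (int m + drift s k)) \<and> int m + drift s k \<ge> 1"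
  using assms(3)
proof (induct k)
  case (Suc k)
  then show ?case using funpow_translation_step[OF s] by simp
qed (use assms(2) in \<open>simp add: drift_def\<close>)

lemma funpow_translation_high:
  assumes s: "s \<in> {1..n}" and "m \<ge> 1" and "\<forall>i<k. snd ((g ^^ i) (s, m)) \<ge> Z"
  shows "(g ^^ k) (s, m) = ((sg ^^ k) s, nat (int m + drift s k)) \<and> int m + drift s k \<ge> 1"
  using assms(3)
proof (induct k)
  case (Suc k)
  then have IH: "(g ^^ k) (s, m) = ((sg ^^ k) s, nat (int m + drift s k))" "int m + drift s k \<ge> 1"
    by simp_all
  moreover have "snd ((g ^^ k) (s, m)) \<ge> Z" using Suc.prems by simp
  ultimately show ?case using funpow_translation_step[OF s] by simp
qed (use assms(2) in \<open>simp add: drift_def\<close>)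

lemma funpow_cycle_translation:
  assumes r: "r \<in> {1..n}" and "m \<ge> 1" and "\<forall>i<p * cyc_len r. snd ((g ^^ i) (r, m)) \<ge> Z"
  shows "(g ^^ (p * cyc_len r)) (r, m) = (r, nat (int m + int p * tcls n g r))
    \<and> int m + int p * tcls n g r \<ge> 1"
  using funpow_translation_high[OF assms] by (simp add: funpow_mult_cyc_len drift_mult_cyc_len)

lemma funpow_far_nonneg_cycle:
  assumes r: "r \<in> {1..n}" and "tcls n g r \<ge> 0" and m0: "int m0 \<ge> far_level"
  shows "(g ^^ j) (r, m0) = ((sg ^^ j) r, nat (int m0 + drift r j)) \<and> int m0 + drift r j \<ge> 1"
proof (rule funpow_translation[OF r])
  show "m0 \<ge> 1" using far_level_ge[OF m0] by simp
  have "drift r i \<ge> - drift_bound" for i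
    using drift_lower[OF r, of i] assms(2) zero_le_mult_iff[of "int (i div cyc_len r)" "tcls n g r"]
    by linarith
  then show "\<forall>i<j. int m0 + drift r i \<ge> int Z" using m0 unfolding far_level_def by smt
qed

lemma fwd_orbit_subset_Xcls:
  assumes r: "r \<in> {1..n}" and "tcls n g r > 0" and m0: "int m0 \<ge> far_level"
  shows "fwd_orbit g (r, m0) \<subseteq> Xcls n g r m0"
proof
  fix x assume "x \<in> fwd_orbit g (r, m0)"
  then obtain j where x: "x = (g ^^ j) (r, m0)" unfolding fwd_orbit_def by blast
  have "x = ((sg ^^ j) r, nat (int m0 + drift r j))" and pos: "int m0 + drift r j \<ge> 1"
    using funpow_far_nonneg_cycle[OF r _ m0] assms(2) x by simp_all
  moreover have "((sg ^^ j) r, nat (int m0 + drift r j)) \<in> Xcls n g r m0"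
    by (rule mem_XclsI[OF r]) (use pos in simp_all)
  ultimately show "x \<in> Xcls n g r m0" by simp
qed

lemma finite_Xcls_diff_fwd_orbit:
  assumes r: "r \<in> {1..n}" and T: "tcls n g r > 0" and m0: "int m0 \<ge> far_level"
  shows "finite (Xcls n g r m0 - fwd_orbit g (r, m0))"
proof -
  have "(a, b) \<in> fwd_orbit g (r, m0)" if ab: "(a, b) \<in> Xcls n g r m0" and b: "int b \<ge> int m0 + drift_bound"
    for a b
  proof -
    obtain q where q: "q < cyc_len r" "a = (sg ^^ q) r"
      and md: "int b mod tcls n g r = (int m0 + drift r q) mod tcls n g r"
      using ab T unfolding mem_Xcls_iff[OF r] by auto
    have "int m0 + drift r q \<le> int b" using abs_drift_within_cycle[OF r q(1)] b by simp
    then obtain p where p: "int b = int m0 + drift r q + int p * tcls n g r"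
      using eq_add_mult_if_mod_eq[OF T md] by blast
    define j where "j = p * cyc_len r + q"
    have "(sg ^^ j) r = a" using q funpow_mod_cyc_len[of j r] by (simp add: j_def)
    moreover have "int m0 + drift r j = int b" using p by (simp add: j_def drift_period)
    ultimately have "(g ^^ j) (r, m0) = (a, b)" using funpow_far_nonneg_cycle[OF r _ m0, of j] T by simp
    then show ?thesis unfolding fwd_orbit_def by (metis rangeI)
  qed
  then have "Xcls n g r m0 - fwd_orbit g (r, m0) \<subseteq> {1..n} \<times> {..< nat (int m0 + drift_bound)}"
    using Xcls_row_in_cls cls_subset[OF r] by fastforce
  then show ?thesis by (rule finite_subset) simp
qed

lemma funpow_reaches_far_point:
  assumes r: "r \<in> {1..n}" and T: "tcls n g r < 0" and m0: "int m0 \<ge> far_level"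
    and qk: "q + k = p * cyc_len r"
  defines "v \<equiv> int m0 + drift r q - int p * tcls n g r"
  shows "v \<ge> 1 \<and> (g ^^ k) ((sg ^^ q) r, nat v) = (r, m0)"
proof -
  define s where "s = (sg ^^ q) r"
  have high: "v + drift s i \<ge> int Z" if "i \<le> k" for i
  proof -
    \<comment> \<open>at most \<open>p\<close> full periods are completed, and each lowers the height by \<open>\<bar>tcls n g r\<bar>\<close>\<close>
    have "(q + i) div cyc_len r \<le> p * cyc_len r div cyc_len r"
      using that qk by (intro div_le_mono) simp
    then have "(q + i) div cyc_len r \<le> p" using cyc_len_pos[of r] by simp
    then have "int ((q + i) div cyc_len r) * tcls n g r \<ge> int p * tcls n g r"
      using T by (intro mult_right_mono_neg) simp_all
    then have "drift r (q + i) \<ge> int p * tcls n g r - drift_bound" using drift_lower[OF r, of "q + i"] by simp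
    then show ?thesis using m0 drift_add[of r q i] unfolding v_def s_def far_level_def by simp
  qed
  then have v: "v \<ge> 1" using high[of 0] Z_pos by (simp add: drift_def)
  have "(g ^^ k) (s, nat v) = ((sg ^^ k) s, nat (v + drift s k))"
    using funpow_translation[OF sg_funpow_in[OF r], of "nat v" k] high v by (simp add: s_def)
  moreover have "(sg ^^ k) s = r" using qk funpow_mult_cyc_len[of p r]
    by (simp add: s_def funpow_apply_funpow add.commute)
  moreover have "v + drift s k = int m0"
    using drift_add[of r q k] qk drift_mult_cyc_len[of r p] by (simp add: v_def s_def)
  ultimately show ?thesis using v by (simp add: s_def)
qed

lemma bwd_orbit_subset_Xcls:
  assumes r: "r \<in> {1..n}" and T: "tcls n g r < 0" and m0: "int m0 \<ge> far_level"
  shows "bwd_orbit g (r, m0) \<subseteq> Xcls n g r m0"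
proof
  fix y assume "y \<in> bwd_orbit g (r, m0)"
  then obtain k where k: "(g ^^ k) y = (r, m0)" unfolding bwd_orbit_def by blast
  define p where "p = k div cyc_len r + 1"
  define q where "q = p * cyc_len r - k"
  have "k mod cyc_len r < cyc_len r" using cyc_len_pos by simp
  then have "k < p * cyc_len r" using div_mult_mod_eq[of k "cyc_len r"] unfolding p_def distrib_right mult_1 by linarith
  then have qk: "q + k = p * cyc_len r" unfolding q_def by simp
  define v where "v = int m0 + drift r q - int p * tcls n g r"
  have v: "v \<ge> 1" and reach: "(g ^^ k) ((sg ^^ q) r, nat v) = (r, m0)"
    using funpow_reaches_far_point[OF r T m0 qk] unfolding v_def by simp_all
  have "y = ((sg ^^ q) r, nat v)" using k reach inj_fn[OF inj_g, of k] by (metis injD)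
  moreover have "((sg ^^ q) r, nat v) \<in> Xcls n g r m0"
  proof (rule mem_XclsI[OF r])
    have "int (nat v) = int m0 + drift r q + int p * \<bar>tcls n g r\<bar>" using v T by (simp add: v_def)
    then show "int (nat v) mod \<bar>tcls n g r\<bar> = (int m0 + drift r q) mod \<bar>tcls n g r\<bar>" by simp
  qed (use v in simp)
  ultimately show "y \<in> Xcls n g r m0" by simp
qed

lemma finite_Xcls_diff_bwd_orbit:
  assumes r: "r \<in> {1..n}" and T: "tcls n g r < 0" and m0: "int m0 \<ge> far_level"
  shows "finite (Xcls n g r m0 - bwd_orbit g (r, m0))"
proof -
  have "(a, b) \<in> bwd_orbit g (r, m0)"
    if ab: "(a, b) \<in> Xcls n g r m0" and b: "int b \<ge> int m0 + drift_bound - tcls n g r" for a b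
  proof -
    have P: "- tcls n g r > 0" and absT: "\<bar>tcls n g r\<bar> = - tcls n g r" using T by simp_all
    obtain q where q: "q < cyc_len r" "a = (sg ^^ q) r"
      and "int b mod (- tcls n g r) = (int m0 + drift r q) mod (- tcls n g r)"
      using ab unfolding mem_Xcls_iff[OF r] absT by auto
    moreover have "(int m0 + drift r q - tcls n g r) mod (- tcls n g r) = (int m0 + drift r q) mod (- tcls n g r)"
      using mod_add_self2[of "int m0 + drift r q" "- tcls n g r"] by simp
    ultimately have md: "int b mod (- tcls n g r) = (int m0 + drift r q - tcls n g r) mod (- tcls n g r)"
      by simp
    have "int m0 + drift r q - tcls n g r \<le> int b" using abs_drift_within_cycle[OF r q(1)] b by simp
    then obtain p' where p': "int b = int m0 + drift r q - tcls n g r + int p' * (- tcls n g r)"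
      using eq_add_mult_if_mod_eq[OF P md] by blast
    have qk: "q + (Suc p' * cyc_len r - q) = Suc p' * cyc_len r" using q(1) by simp
    moreover have "nat (int m0 + drift r q - int (Suc p') * tcls n g r) = b" using p' by (simp add: algebra_simps)
    ultimately have "(g ^^ (Suc p' * cyc_len r - q)) (a, b) = (r, m0)"
      using funpow_reaches_far_point[OF r T m0 qk] q(2) by simp
    then show ?thesis unfolding bwd_orbit_def by blast
  qed
  then have "Xcls n g r m0 - bwd_orbit g (r, m0)
      \<subseteq> {1..n} \<times> {..< nat (int m0 + drift_bound - tcls n g r)}"
    using Xcls_row_in_cls cls_subset[OF r] by fastforce
  then show ?thesis by (rule finite_subset) simp
qed

lemma eventually_far:
  fixes f :: "nat \<Rightarrow> pt"
  assumes "inj f" and "\<And>j. f j \<in> Xn n"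
  shows "\<exists>K. \<forall>j\<ge>K. int (snd (f j)) \<ge> far_level"
proof -
  let ?S = "{x \<in> Xn n. int (snd x) < far_level}"
  have "?S \<subseteq> {1..n} \<times> {..< nat far_level}" by (auto simp: Xn_def)
  then have "finite ?S" by (rule finite_subset) simp
  then have "finite (f -` ?S)" using assms(1) by (rule finite_vimageI)
  then obtain K where K: "\<forall>j\<in>f -` ?S. j < K" using finite_nat_set_iff_bounded by blast
  have "int (snd (f j)) \<ge> far_level" if "j \<ge> K" for j
    using K that assms(2)[of j] by fastforce
  then show ?thesis by blast
qed

lemma funpow_cycle_translation_to:
  assumes y: "y \<in> Xn n" and r: "r \<in> {1..n}" and reach: "(g ^^ (p * cyc_len r)) y = (r, m)"
    and high: "\<forall>i<p * cyc_len r. snd ((g ^^ i) y) \<ge> Z"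
  shows "y = (r, nat (int m - int p * tcls n g r)) \<and> int m - int p * tcls n g r \<ge> 1"
proof -
  obtain r' m' where y': "y = (r', m')" by (cases y)
  have r': "r' \<in> {1..n}" and "m' \<ge> 1" using y y' by (auto simp: mem_Xn_iff)
  from funpow_translation_high[OF this] high y'
  have "(g ^^ (p * cyc_len r)) y = ((sg ^^ (p * cyc_len r)) r', nat (int m' + drift r' (p * cyc_len r)))"
    and "int m' + drift r' (p * cyc_len r) \<ge> 1" by auto
  then have row: "(sg ^^ (p * cyc_len r)) r' = r" and m: "int m = int m' + drift r' (p * cyc_len r)"
    using reach by auto
  then have r_cls: "r \<in> cls n g r'" using funpow_in_cls[of "p * cyc_len r" r'] by simp
  have L: "cyc_len r' = cyc_len r" using cls_eq_if_mem[OF r_cls] by simp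
  have "(sg ^^ (p * cyc_len r)) r' = r'" using funpow_mult_cyc_len[of p r'] unfolding L .
  then have "r' = r" using row by simp
  moreover have "drift r' (p * cyc_len r) = int p * tcls n g r"
    using drift_mult_cyc_len[of r' p] tcls_eq_if_mem[OF r_cls] unfolding L by simp
  ultimately show ?thesis using y' m \<open>m' \<ge> 1\<close> by simp
qed

lemma fwd_escape:
  assumes x: "x \<in> Xn n" and aper: "\<forall>p>0. (g ^^ p) x \<noteq> x"
  shows "\<exists>K r1 m1. (g ^^ K) x = (r1, m1) \<and> r1 \<in> {1..n} \<and> tcls n g r1 > 0 \<and> int m1 \<ge> far_level"
proof -
  define f where "f j = (g ^^ j) x" for j
  have inj: "inj f" unfolding f_def by (rule inj_funpow_orbit[OF inj_g aper])
  obtain K where K: "\<forall>j\<ge>K. int (snd (f j)) \<ge> far_level"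
    using eventually_far[OF inj] x funpow_in_Xn_iff unfolding f_def by blast
  obtain r1 m1 where y: "f K = (r1, m1)" by (cases "f K")
  have "(r1, m1) \<in> Xn n" using y x funpow_in_Xn_iff unfolding f_def by metis
  then have r1: "r1 \<in> {1..n}" and m1: "m1 \<ge> 1" "int m1 \<ge> far_level"
    using K y by (auto simp: mem_Xn_iff)
  have f_shift: "f (K + i) = (g ^^ i) (r1, m1)" for i
    using y[symmetric] unfolding f_def by (simp add: funpow_apply_funpow add.commute)
  have cyc: "f (K + p * cyc_len r1) = (r1, nat (int m1 + int p * tcls n g r1))
      \<and> int m1 + int p * tcls n g r1 \<ge> 1" for p
  proof -
    have "snd ((g ^^ i) (r1, m1)) \<ge> Z" for i
      using K[rule_format, of "K + i"] f_shift[of i] far_level_ge by simp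
    then show ?thesis using funpow_cycle_translation[OF r1 m1(1), of p] f_shift by simp
  qed
  have "tcls n g r1 \<noteq> 0"
  proof
    assume "tcls n g r1 = 0"
    then have "f (K + cyc_len r1) = f K" using cyc[of 1] y by simp
    then show False using injD[OF inj] cyc_len_pos[of r1] by fastforce
  qed
  moreover have "\<not> tcls n g r1 < 0"
  proof
    assume "tcls n g r1 < 0"
    then have "int m1 * tcls n g r1 \<le> int m1 * (- 1)" by (intro mult_left_mono) auto
    then show False using cyc[of m1] by simp
  qed
  ultimately have "tcls n g r1 > 0" by simp
  then show ?thesis using y r1 m1 unfolding f_def by blast
qed

lemma bwd_escape:
  assumes x: "x \<in> Xn n" and aper: "\<forall>p>0. (g ^^ p) x \<noteq> x"
  shows "\<exists>K r1 m1. (g ^^ K) (r1, m1) = x \<and> r1 \<in> {1..n} \<and> tcls n g r1 < 0 \<and> int m1 \<ge> far_level"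
proof -
  define b where "b j = inv (g ^^ j) x" for j
  have g_b: "(g ^^ j) (b j) = x" for j unfolding b_def by (rule funpow_inv_funpow_self[OF bij_g])
  have b_shift: "(g ^^ i) (b j) = b (j - i)" if "i \<le> j" for i j
    unfolding b_def by (rule funpow_inv_funpow[OF bij_g that])
  have inj: "inj b" unfolding b_def by (rule inj_inv_funpow_orbit[OF bij_g aper])
  have b_Xn: "b j \<in> Xn n" for j using g_b[of j] x funpow_in_Xn_iff by metis
  obtain K where K: "\<forall>j\<ge>K. int (snd (b j)) \<ge> far_level"
    using eventually_far[OF inj b_Xn] by blast
  obtain r1 m1 where y: "b K = (r1, m1)" by (cases "b K")
  have r1: "r1 \<in> {1..n}" and m1: "int m1 \<ge> far_level"
    using b_Xn[of K] K y by (auto simp: mem_Xn_iff)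
  have cyc: "b (K + p * cyc_len r1) = (r1, nat (int m1 - int p * tcls n g r1))
      \<and> int m1 - int p * tcls n g r1 \<ge> 1" for p
  proof (rule funpow_cycle_translation_to[OF b_Xn r1])
    show "(g ^^ (p * cyc_len r1)) (b (K + p * cyc_len r1)) = (r1, m1)" using b_shift y by simp
    show "\<forall>i<p * cyc_len r1. snd ((g ^^ i) (b (K + p * cyc_len r1))) \<ge> Z"
      using b_shift K far_level_ge by simp
  qed
  have "tcls n g r1 \<noteq> 0"
  proof
    assume "tcls n g r1 = 0"
    then have "b (K + cyc_len r1) = b K" using cyc[of 1] y by simp
    then show False using injD[OF inj] cyc_len_pos[of r1] by fastforce
  qed
  moreover have "\<not> tcls n g r1 > 0"
  proof
    assume "tcls n g r1 > 0"
    then have "int m1 * tcls n g r1 \<ge> int m1 * 1" by (intro mult_left_mono) auto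
    then show False using cyc[of m1] by simp
  qed
  ultimately have "tcls n g r1 < 0" by simp
  then show ?thesis using g_b[of K] y r1 m1 by auto
qed

lemma finite_Xcls_diff_gorb:
  assumes k: "k \<in> {1..n}" and T: "tcls n g k \<noteq> 0" and m: "int m \<ge> far_level"
  shows "finite (Xcls n g k m - gorb g (k, m))"
proof (cases "tcls n g k > 0")
  case True
  then show ?thesis using finite_Xcls_diff_fwd_orbit[OF k True m]
    by (rule_tac finite_subset[of _ "Xcls n g k m - fwd_orbit g (k, m)"]) (auto simp: gorb_eq_fwd_bwd)
next
  case False
  then have "tcls n g k < 0" using T by simp
  then show ?thesis using finite_Xcls_diff_bwd_orbit[OF k _ m]
    by (rule_tac finite_subset[of _ "Xcls n g k m - bwd_orbit g (k, m)"]) (auto simp: gorb_eq_fwd_bwd)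
qed

lemma infinite_gorb_far:
  assumes k: "k \<in> {1..n}" and T: "tcls n g k \<noteq> 0" and m: "int m \<ge> far_level"
  shows "infinite (gorb g (k, m))"
proof
  assume "finite (gorb g (k, m))"
  then have "finite (Xcls n g k m)"
    using finite_Xcls_diff_gorb[OF assms] by (metis Diff_infinite_finite finite_Diff2)
  then show False using infinite_Xcls[OF k T] far_level_ge[OF m] by simp
qed

lemma finite_gorb_far_zero:
  assumes k: "k \<in> {1..n}" and T: "tcls n g k = 0" and m: "int m \<ge> far_level"
  shows "finite (gorb g (k, m))"
proof -
  have "(g ^^ cyc_len k) (k, m) = (k, m)"
    using funpow_far_nonneg_cycle[OF k _ m, of "cyc_len k"] T
    by (simp add: funpow_cyc_len drift_mult_cyc_len[of k 1, simplified])
  then show ?thesis using finite_gorb_if_periodic[OF inj_g] cyc_len_pos by blast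
qed

lemma gorb_far_splits:
  assumes k: "k \<in> {1..n}" and T: "tcls n g k \<noteq> 0" and m: "int m \<ge> far_level"
  shows "\<exists>r\<in>Ig n g. splits n g (gorb g (k, m)) k r \<or> splits n g (gorb g (k, m)) r k"
proof -
  have x: "(k, m) \<in> Xn n" using k far_level_ge[OF m] by (simp add: mem_Xn_iff)
  have aper: "\<forall>p>0. (g ^^ p) (k, m) \<noteq> (k, m)"
    using infinite_gorb_far[OF assms] finite_gorb_if_periodic[OF inj_g] by blast
  consider "tcls n g k > 0" | "tcls n g k < 0" using T by linarith
  then show ?thesis
  proof cases
    case 1
    obtain K r1 m1 where z: "(g ^^ K) (r1, m1) = (k, m)" and r1: "r1 \<in> {1..n}"
      and T1: "tcls n g r1 < 0" and m1: "int m1 \<ge> far_level"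
      using bwd_escape[OF x aper] by blast
    have "almost_eq (gorb g (k, m)) (Xcls n g k m \<union> Xcls n g r1 m1)"
      by (rule almost_eq_gorb_union[OF inj_g funpow_0 z fwd_orbit_subset_Xcls[OF k 1 m]
          finite_Xcls_diff_fwd_orbit[OF k 1 m] bwd_orbit_subset_Xcls[OF r1 T1 m1]
          finite_Xcls_diff_bwd_orbit[OF r1 T1 m1]])
    moreover have "Xcls n g k m \<inter> Xcls n g r1 m1 = {}" using 1 T1 by (simp add: Xcls_disjoint_if_tcls_ne)
    ultimately have "splits n g (gorb g (k, m)) k r1"
      unfolding splits_def using far_level_ge[OF m] far_level_ge[OF m1] by blast
    then show ?thesis using r1 T1 unfolding Ig_def by auto
  next
    case 2
    obtain K r1 m1 where y: "(g ^^ K) (k, m) = (r1, m1)" and r1: "r1 \<in> {1..n}"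
      and T1: "tcls n g r1 > 0" and m1: "int m1 \<ge> far_level"
      using fwd_escape[OF x aper] by blast
    have "almost_eq (gorb g (k, m)) (Xcls n g r1 m1 \<union> Xcls n g k m)"
      by (rule almost_eq_gorb_union[OF inj_g y funpow_0 fwd_orbit_subset_Xcls[OF r1 T1 m1]
          finite_Xcls_diff_fwd_orbit[OF r1 T1 m1] bwd_orbit_subset_Xcls[OF k 2 m]
          finite_Xcls_diff_bwd_orbit[OF k 2 m]])
    moreover have "Xcls n g r1 m1 \<inter> Xcls n g k m = {}" using 2 T1 by (simp add: Xcls_disjoint_if_tcls_ne)
    ultimately have "splits n g (gorb g (k, m)) r1 k"
      unfolding splits_def using far_level_ge[OF m] far_level_ge[OF m1] by blast
    then show ?thesis using r1 T1 unfolding Ig_def by auto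
  qed
qed

lemma far_in_gpart_supp:
  assumes k: "k \<in> Cg n g i" and m: "int m \<ge> far_level"
  shows "in_gpart_supp i (k, m)"
proof -
  have k1: "k \<in> {1..n}" and T: "tcls n g k \<noteq> 0" using Cg_subset[OF k] by auto
  have x: "(k, m) \<in> Xn n" using k1 far_level_ge[OF m] by (simp add: mem_Xn_iff)
  obtain r where r: "r \<in> Ig n g"
    and sp: "splits n g (gorb g (k, m)) k r \<or> splits n g (gorb g (k, m)) r k"
    using gorb_far_splits[OF k1 T m] by blast
  have "k \<in> Ig n g" using k1 T unfolding Ig_def by simp
  then have "(cls n g r, cls n g k) \<in> simbase n g \<or> (cls n g k, cls n g r) \<in> simbase n g"
    using r x sp unfolding simbase_def by blast
  moreover have "(cls n g k, cls n g i) \<in> simg n g" using k unfolding Cg_def by blast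
  ultimately have "r \<in> Cg n g i" using r simg_extend unfolding Cg_def by blast
  then show ?thesis
    unfolding in_gpart_supp_def using x infinite_gorb_far[OF k1 T m] sp k by blast
qed

lemma far_not_in_gpart_supp:
  assumes k: "k \<in> {1..n}" "k \<notin> Cg n g i" and m: "int m \<ge> far_level"
  shows "\<not> in_gpart_supp i (k, m)"
proof
  assume "in_gpart_supp i (k, m)"
  then obtain j j' d e where inf: "infinite (gorb g (k, m))" and j: "j \<in> Cg n g i" "j' \<in> Cg n g i"
    and ae: "almost_eq (gorb g (k, m)) (Xcls n g j d \<union> Xcls n g j' e)"
    unfolding in_gpart_supp_def splits_def by blast
  have T: "tcls n g k \<noteq> 0" using finite_gorb_far_zero[OF k(1) _ m] inf by auto
  have "Xcls n g k m \<inter> (Xcls n g j d \<union> Xcls n g j' e) = {}"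
    using Xcls_disjoint_Cg[OF k(2) j(1)] Xcls_disjoint_Cg[OF k(2) j(2)] by blast
  then have "Xcls n g k m \<subseteq> (Xcls n g k m - gorb g (k, m)) \<union> (gorb g (k, m) - (Xcls n g j d \<union> Xcls n g j' e))"
    by blast
  moreover have "finite (gorb g (k, m) - (Xcls n g j d \<union> Xcls n g j' e))"
    using ae unfolding almost_eq_def by blast
  ultimately have "finite (Xcls n g k m)"
    using finite_Xcls_diff_gorb[OF k(1) T m] by (meson finite_UnI finite_subset)
  then show False using infinite_Xcls[OF k(1) T] far_level_ge[OF m] by simp
qed

definition sg_on_Cg :: "nat \<Rightarrow> nat \<Rightarrow> nat" where
  "sg_on_Cg i = perm_restrict sg (Cg n g i)"

lemma sg_on_Cg_permutes: "sg_on_Cg i permutes {1..n}"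
  unfolding sg_on_Cg_def
proof (rule permutes_perm_restrict[OF sg_permutes])
  show "Cg n g i \<subseteq> {1..n}" using Cg_subset by blast
  show "x \<in> Cg n g i \<Longrightarrow> sg x \<in> Cg n g i" for x
    using Cg_cls_closed funpow_in_cls[of 1 x] by simp
qed simp

definition gpart_omega :: "nat \<Rightarrow> perm" where
  "gpart_omega i x = sact n (inv (sg_on_Cg i)) (gpart n g i x)"

lemma gpart_eq_rmul: "gpart n g i = rmul (gpart_omega i) (sact n (sg_on_Cg i))"
  unfolding rmul_def gpart_omega_def
  by (rule ext) (simp add: sact_sact_inv[OF sg_on_Cg_permutes])

lemma gpart_omega_far:
  assumes r: "r \<in> {1..n}" and m: "int m \<ge> far_level"
  fixes i :: nat
  defines "s \<equiv> if r \<in> Cg n g i then t r else 0"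
  shows "fst (gpart_omega i (r, m)) = r \<and> int (snd (gpart_omega i (r, m))) = int m + s"
proof -
  have inv: "inv (sg_on_Cg i) (sg_on_Cg i r) = r"
    using permutes_inverses(2)[OF sg_on_Cg_permutes] by simp
  have gp: "gpart n g i (r, m) = (sg_on_Cg i r, nat (int m + s)) \<and> int m + s \<ge> 1"
  proof (cases "r \<in> Cg n g i")
    case True
    then show ?thesis using far_in_gpart_supp[OF True m] translation[OF r] far_level_ge[OF m]
      by (simp add: gpart_apply s_def sg_on_Cg_def perm_restrict_simps)
  next
    case False
    then show ?thesis using far_not_in_gpart_supp[OF r False m] far_level_ge[OF m]
      by (simp add: gpart_apply s_def sg_on_Cg_def perm_restrict_simps)
  qed
  moreover have "sg_on_Cg i r \<in> {1..n}" using permutes_in_image[OF sg_on_Cg_permutes] r by blast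
  moreover have "nat (int m + s) \<ge> 1" using gp by (subst le_nat_iff) auto
  ultimately have "(sg_on_Cg i r, nat (int m + s)) \<in> Xn n" by (simp add: mem_Xn_iff)
  then show ?thesis
    unfolding gpart_omega_def using gp inv sact_apply_Xn by simp
qed

lemma gpart_omega_in_Hn: "gpart_omega i \<in> Hn n"
proof -
  have "bij_betw (gpart_omega i) (Xn n) (Xn n)"
    using bij_betw_trans[OF bij_betw_gpart[of i] bij_betw_sact[OF permutes_inv[OF sg_on_Cg_permutes[of i]]]]
    by (simp add: gpart_omega_def[abs_def] comp_def)
  moreover have "gpart_omega i x = x" if "x \<notin> Xn n" for x
    using that by (simp add: gpart_omega_def gpart_apply in_gpart_supp_def sact_apply_outside)
  moreover have "\<exists>z s. \<forall>m\<ge>z. fst (gpart_omega i (r, m)) = r \<and>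
      int (snd (gpart_omega i (r, m))) = int m + s" if "r \<in> {1..n}" for r
    using gpart_omega_far[OF that] by (metis nat_int nat_le_iff)
  ultimately show ?thesis unfolding Hn_def by blast
qed

lemma gpart_in_centraliser: "gpart n g i \<in> HS n \<and> rmul (gpart n g i) g = rmul g (gpart n g i)"
  using gpart_eq_rmul gpart_omega_in_Hn sg_on_Cg_permutes gpart_commute unfolding HS_def by blast

end

theorem lemma4p19:
  fixes n i :: nat and g :: perm
  assumes "n \<ge> 2" and "g \<in> HS n" and "i \<in> Ig n g"
  shows "gpart n g i \<in> HS n \<and> rmul (gpart n g i) g = rmul g (gpart n g i)"
proof -
  interpret hs_elem n g using assms(2) by unfold_locales
  obtain Z where "Z \<ge> 1" "\<forall>r\<in>{1..n}. \<forall>m\<ge>Z.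
      g (r, m) = (sig n g r, nat (int m + tt n g r)) \<and> int m + tt n g r \<ge> 1"
    using eventually_translation by blast
  then interpret hs_far n g Z by unfold_locales auto
  show ?thesis by (rule gpart_in_centraliser)
qed

end
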